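(* Suppose $a:[0,x_J]\times\mathcal T\to[0,\infty)$ is convex in its first argument and the reals $e^1_{j,n},e^2_{j,n},v_{j,n}$ ($0\le j\le J$, $1\le n\le N$), $d^1_{j,n},d^2_{j,n}$ ($1\le n\le N-1$) are feasible for $\mathbf L_H^{\mathcal X,\mathcal T}$ (with $a$ restricted to $\mathcal X\times\mathcal T$). Then the extended semi-static strategy described in the context super-replicates the American claim along all paths with $X_{t_n}\in[0,x_J]$ for $1\le n\le N$: for every $(y_1,\dots,y_N)\in[0,x_J]^N$ and every exercise time $\rho\in\mathcal T$, its terminal payoff satisfies $\mathcal G_T\ge a(y_{\mathcal N(\rho)},\rho)$, where $\mathcal N(\rho)=\min\{n:t_n\ge\rho\}$.
   Context: Fix $N\ge1$, $J\ge1$, times $0=t_0<t_1<\dots<t_N=T$, $\mathcal T=\{t_1,\dots,t_N\}$, strikes $0=x_0<x_1<\dots<x_J$, $\mathcal X=\{x_0,\dots,x_J\}$ and numbers $p_{j,n}$. $\mathbf L_H^{\mathcal X,\mathcal T}$ is the linear program: over reals $e^1_{j,n},e^2_{j,n},v_{j,n}$ ($1\le n\le N$) and $d^1_{j,n},d^2_{j,n}$ ($1\le n\le N-1$), with $e^1_{j,N}=e^2_{j,1}=0$, minimise $\sum_{j,n}(e^1_{j,n}+e^2_{j,n})p_{j,n}+\sum_jv_{j,N}p_{j,N}$ subject to $v_{j,n}\ge0$ and (i) $v_{j,n}\ge a(x_j,t_n)$; (ii) $e^1_{j,n}+e^2_{k,n+1}+(x_k-x_j)d^1_{j,n}\ge0$;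 (iii) $e^1_{j,n}+e^2_{k,n+1}+(x_k-x_j)d^2_{j,n}-v_{j,n}+v_{k,n+1}\ge0$ for $0\le j,k\le J$, $1\le n\le N-1$. Linear interpolation of $(h_j)_{0\le j\le J}$: $\bar h(x)=\frac{x_{j+1}-x}{x_{j+1}-x_j}h_j+\frac{x-x_j}{x_{j+1}-x_j}h_{j+1}$ for $x_j\le x\le x_{j+1}$. Write $\bar e^1_n,\bar e^2_n,\bar v_n$ for the linear interpolations of $(e^1_{j,n})_j$, $(e^2_{j,n})_j$, $(v_{j,n})_j$. Mixed interpolation: with $u^1_{j,n}=\frac{e^1_{j+1,n}-e^1_{j,n}}{x_{j+1}-x_j}$, $u^2_{j,n}=\frac{(e^1_{j+1,n}-v_{j+1,n})-(e^1_{j,n}-v_{j,n})}{x_{j+1}-x_j}$, set $\tilde d^\delta_n(x_j)=d^\delta_{j,n}$ and for $x\in(x_j,x_{j+1})$: $\tilde d^\delta_n(x)=d^\delta_{j,n}$ if $d^\delta_{j,n}\le u^\delta_{j,n}$; $=d^\delta_{j+1,n}$ if $d^\delta_{j,n}>u^\delta_{j,n}$ and $d^\delta_{j+1,n}\ge u^\delta_{j,n}$; $=u^\delta_{j,n}$ if $d^\delta_{j+1,n}<u^\delta_{j,n}<d^\delta_{j,n}$. The extended strategy holds European claims (portfolios of calls with strikes in $\mathcal X$) paying $\bar e^1_n(X_{t_n})+\bar e^2_n(X_{t_n})$ at $t_n$ for each $n$ and additionally $\bar v_N(X_{t_N})$ at $t_N$, and over $[t_n,t_{n+1}]$ holds $\tilde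 d^1_n(X_{t_n})$ shares if $n<\mathcal N(\rho)$ and $\tilde d^2_n(X_{t_n})$ shares if $n\ge\mathcal N(\rho)$. Its terminal payoff along $(y_1,\dots,y_N)$ with exercise at $\rho$ is $\mathcal G_T=\sum_{n=1}^N(\bar e^1_n(y_n)+\bar e^2_n(y_n))+\bar v_N(y_N)+\sum_{n=1}^{\mathcal N(\rho)-1}(y_{n+1}-y_n)\tilde d^1_n(y_n)+\sum_{n=\mathcal N(\rho)}^{N-1}(y_{n+1}-y_n)\tilde d^2_n(y_n)$. *)

theory Defs
  imports "HOL-Analysis.Analysis"
begin

text \<open>Strikes are given as x :: nat => real with x 0 = 0 < x 1 < ... < x J.
  A table h :: nat => real gives values h j at the strikes x j.\<close>

definition seg_idx :: "(nat \<Rightarrow> real) \<Rightarrow> nat \<Rightarrow> real \<Rightarrow> nat" where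
  "seg_idx x J y = (LEAST j. j < J \<and> x j \<le> y \<and> y \<le> x (Suc j))"

definition lin_interp :: "(nat \<Rightarrow> real) \<Rightarrow> nat \<Rightarrow> (nat \<Rightarrow> real) \<Rightarrow> real \<Rightarrow> real" where
  "lin_interp x J h y =
     (let j = seg_idx x J y in
        (x (Suc j) - y) / (x (Suc j) - x j) * h j + (y - x j) / (x (Suc j) - x j) * h (Suc j))"

definition mixed_interp ::
  "(nat \<Rightarrow> real) \<Rightarrow> nat \<Rightarrow> (nat \<Rightarrow> real) \<Rightarrow> (nat \<Rightarrow> real) \<Rightarrow> real \<Rightarrow> real" where
  "mixed_interp x J d u y =
     (if \<exists>j\<le>J. y = x j then d (LEAST j. j \<le> J \<and> y = x j)
      else (let j = seg_idx x J y in
              if d j \<le> u j then d j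
              else if u j \<le> d (Suc j) then d (Suc j)
              else u j))"

definition Nidx :: "(nat \<Rightarrow> real) \<Rightarrow> real \<Rightarrow> nat" where
  "Nidx t \<rho> = (LEAST n. 1 \<le> n \<and> \<rho> \<le> t n)"

text \<open>Feasibility for the linear program L_H^{X,T} (objective irrelevant to feasibility).
  Indexing: e1 j n etc.\<close>
definition LH_feasible ::
  "nat \<Rightarrow> nat \<Rightarrow> (nat \<Rightarrow> real) \<Rightarrow> (nat \<Rightarrow> real) \<Rightarrow> (real \<Rightarrow> real \<Rightarrow> real)
   \<Rightarrow> (nat \<Rightarrow> nat \<Rightarrow> real) \<Rightarrow> (nat \<Rightarrow> nat \<Rightarrow> real) \<Rightarrow> (nat \<Rightarrow> nat \<Rightarrow> real)
   \<Rightarrow> (nat \<Rightarrow> nat \<Rightarrow> real) \<Rightarrow> (nat \<Rightarrow> nat \<Rightarrow> real) \<Rightarrow> bool" where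
  "LH_feasible N J t x a e1 e2 v d1 d2 \<longleftrightarrow>
     (\<forall>j\<le>J. e1 j N = 0 \<and> e2 j 1 = 0) \<and>
     (\<forall>j\<le>J. \<forall>n\<in>{1..N}. v j n \<ge> 0 \<and> v j n \<ge> a (x j) (t n)) \<and>
     (\<forall>j\<le>J. \<forall>k\<le>J. \<forall>n\<in>{1..N-1}.
        e1 j n + e2 k (Suc n) + (x k - x j) * d1 j n \<ge> 0 \<and>
        e1 j n + e2 k (Suc n) + (x k - x j) * d2 j n - v j n + v k (Suc n) \<ge> 0)"

definition slope1 :: "(nat \<Rightarrow> real) \<Rightarrow> (nat \<Rightarrow> nat \<Rightarrow> real) \<Rightarrow> nat \<Rightarrow> nat \<Rightarrow> real" where
  "slope1 x e1 n j = (e1 (Suc j) n - e1 j n) / (x (Suc j) - x j)"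

definition slope2 :: "(nat \<Rightarrow> real) \<Rightarrow> (nat \<Rightarrow> nat \<Rightarrow> real) \<Rightarrow> (nat \<Rightarrow> nat \<Rightarrow> real)
   \<Rightarrow> nat \<Rightarrow> nat \<Rightarrow> real" where
  "slope2 x e1 v n j = ((e1 (Suc j) n - v (Suc j) n) - (e1 j n - v j n)) / (x (Suc j) - x j)"

definition payoff_GT ::
  "nat \<Rightarrow> nat \<Rightarrow> (nat \<Rightarrow> real) \<Rightarrow> (nat \<Rightarrow> real)
   \<Rightarrow> (nat \<Rightarrow> nat \<Rightarrow> real) \<Rightarrow> (nat \<Rightarrow> nat \<Rightarrow> real) \<Rightarrow> (nat \<Rightarrow> nat \<Rightarrow> real)
   \<Rightarrow> (nat \<Rightarrow> nat \<Rightarrow> real) \<Rightarrow> (nat \<Rightarrow> nat \<Rightarrow> real)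
   \<Rightarrow> (nat \<Rightarrow> real) \<Rightarrow> real \<Rightarrow> real" where
  "payoff_GT N J t x e1 e2 v d1 d2 y \<rho> =
     (\<Sum>n=1..N. lin_interp x J (\<lambda>j. e1 j n) (y n) + lin_interp x J (\<lambda>j. e2 j n) (y n))
     + lin_interp x J (\<lambda>j. v j N) (y N)
     + (\<Sum>n=1..<Nidx t \<rho>. (y (Suc n) - y n) *
          mixed_interp x J (\<lambda>j. d1 j n) (slope1 x e1 n) (y n))
     + (\<Sum>n=Nidx t \<rho>..<N. (y (Suc n) - y n) *
          mixed_interp x J (\<lambda>j. d2 j n) (slope2 x e1 v n) (y n))"

end

theory Submission
  imports Defs
begin

text \<open>
  Feasibility for the linear program is the super-replication inequality at the strikes, and
  the interpolated strategy inherits it on all of \<open>[0, x J]\<close>. On a segment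
  \<open>[x j, x (j+1)]\<close> the interpolated \<open>e\<^sup>1\<close>-claim is affine with slope \<open>u\<close>, and the mixed
  interpolation chooses the hedge ratio so that the one-period gain towards a strike is a
  nonnegative combination of two constraints (ii) resp. (iii); interpolating in the second
  price as well gives the one-period inequalities for arbitrary prices. Before exercise the
  one-period gains are nonnegative, from exercise on they dominate the decrease of the
  interpolated \<open>v\<close>, so the payoff telescopes down to the interpolated \<open>v\<close> at the exercise
  date, which dominates \<open>a\<close> there by convexity.
\<close>

lemma segment_weights:
  fixes a b y :: real
  assumes "a < b"
  shows "(b - y) / (b - a) + (y - a) / (b - a) = 1"
    and "(b - y) / (b - a) * a + (y - a) / (b - a) * b = y"
proof -
  define D where "D = b - a"
  have "D \<noteq> 0" using assms by (simp add: D_def)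
  then have "(b - y) / D + (y - a) / D = 1 \<and> (b - y) / D * a + (y - a) / D * b = y"
    by (simp add: field_simps) (simp add: D_def algebra_simps)
  then show "(b - y) / (b - a) + (y - a) / (b - a) = 1"
    and "(b - y) / (b - a) * a + (y - a) / (b - a) * b = y"
    by (simp_all add: D_def)
qed

lemma segment_interpolation_affine:
  fixes a b y h\<^sub>a h\<^sub>b :: real
  assumes "a < b"
  shows "(b - y) / (b - a) * h\<^sub>a + (y - a) / (b - a) * h\<^sub>b = h\<^sub>a + (y - a) * ((h\<^sub>b - h\<^sub>a) / (b - a))"
proof -
  define D where "D = b - a"
  have "D \<noteq> 0" using assms by (simp add: D_def)
  then have "(b - y) / D * h\<^sub>a + (y - a) / D * h\<^sub>b = h\<^sub>a + (y - a) * ((h\<^sub>b - h\<^sub>a) / D)"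
    by (simp add: field_simps) (simp add: D_def algebra_simps)
  then show ?thesis by (simp add: D_def)
qed

lemma lin_interp_add:
  "lin_interp x J (\<lambda>j. f j + g j) y = lin_interp x J f y + lin_interp x J g y"
  unfolding lin_interp_def Let_def by (simp add: distrib_left)

lemma lin_interp_diff:
  "lin_interp x J (\<lambda>j. f j - g j) y = lin_interp x J f y - lin_interp x J g y"
  unfolding lin_interp_def Let_def by (simp add: right_diff_distrib)

locale increasing_knots =
  fixes x :: "nat \<Rightarrow> real" and J :: nat
  assumes J_pos: "1 \<le> J"
    and knot_less_Suc: "\<And>j. j < J \<Longrightarrow> x j < x (Suc j)"
begin

lemma knot_less: "i < k \<Longrightarrow> k \<le> J \<Longrightarrow> x i < x k"
proof (induction k)
  case (Suc k)
  then have "x i \<le> x k"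
    by (cases "i = k") (auto simp: less_Suc_eq intro: less_imp_le)
  also have "x k < x (Suc k)"
    using Suc.prems by (intro knot_less_Suc) simp
  finally show ?case .
qed simp

lemma knot_le_iff: "i \<le> J \<Longrightarrow> k \<le> J \<Longrightarrow> x i \<le> x k \<longleftrightarrow> i \<le> k"
  using knot_less[of i k] knot_less[of k i] by (cases i k rule: linorder_cases) auto

lemma knot_eq_iff: "i \<le> J \<Longrightarrow> k \<le> J \<Longrightarrow> x i = x k \<longleftrightarrow> i = k"
  using knot_le_iff[of i k] knot_le_iff[of k i] by auto

lemma segment_exists:
  assumes "x 0 \<le> y"
  shows "1 \<le> m \<Longrightarrow> m \<le> J \<Longrightarrow> y \<le> x m \<Longrightarrow> \<exists>j<m. x j \<le> y \<and> y \<le> x (Suc j)"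
proof (induction m)
  case (Suc m)
  show ?case
  proof (cases "1 \<le> m \<and> y \<le> x m")
    case True
    with Suc show ?thesis by (meson Suc_leD less_SucI)
  next
    case False
    with Suc.prems have "m = 0 \<or> x m < y" by auto
    with Suc.prems assms show ?thesis by (metis lessI order_less_imp_le)
  qed
qed simp

lemma seg_idx_bracket:
  assumes "x 0 \<le> y" "y \<le> x J"
  shows "seg_idx x J y < J" "x (seg_idx x J y) \<le> y" "y \<le> x (Suc (seg_idx x J y))"
proof -
  have "\<exists>j. j < J \<and> x j \<le> y \<and> y \<le> x (Suc j)"
    using segment_exists[OF assms(1) J_pos order_refl assms(2)] by blast
  then have "seg_idx x J y < J \<and> x (seg_idx x J y) \<le> y \<and> y \<le> x (Suc (seg_idx x J y))"
    unfolding seg_idx_def by (rule LeastI_ex)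
  then show "seg_idx x J y < J" "x (seg_idx x J y) \<le> y" "y \<le> x (Suc (seg_idx x J y))"
    by auto
qed

text \<open>\<^const>\<open>seg_idx\<close> picks the leftmost segment, so at an interior knot \<open>y = x j\<close> it
  returns \<open>j - 1\<close>; both neighbouring formulas agree there.\<close>

lemma lin_interp_on_segment:
  assumes j: "j < J" and y: "x j \<le> y" "y \<le> x (Suc j)"
  shows "lin_interp x J h y = (x (Suc j) - y) / (x (Suc j) - x j) * h j
            + (y - x j) / (x (Suc j) - x j) * h (Suc j)"
proof -
  define i where "i = seg_idx x J y"
  have range: "x 0 \<le> y" "y \<le> x J"
    using y knot_le_iff[of 0 j] knot_le_iff[of "Suc j" J] j by auto
  have i: "i < J" "x i \<le> y" "y \<le> x (Suc i)"
    using seg_idx_bracket[OF range] unfolding i_def by auto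
  have "i \<le> j"
    unfolding i_def seg_idx_def by (rule Least_le) (use j y in auto)
  show ?thesis
  proof (cases "i = j")
    case True
    then show ?thesis unfolding lin_interp_def i_def[symmetric] Let_def by simp
  next
    case False
    with \<open>i \<le> j\<close> have "Suc i \<le> j" by simp
    then have "x (Suc i) \<le> x j" using knot_le_iff[of "Suc i" j] j by simp
    with i y have "y = x j" "x (Suc i) = x j" by auto
    moreover from this have "Suc i = j" using knot_eq_iff[of "Suc i" j] j \<open>Suc i \<le> j\<close> by simp
    moreover have "x (Suc j) \<noteq> x j" "x j \<noteq> x i"
      using knot_less_Suc[OF j] knot_less_Suc[OF i(1)] \<open>Suc i = j\<close> by auto
    ultimately show ?thesis unfolding lin_interp_def i_def[symmetric] Let_def by auto
  qed
qed

lemma lin_interp_at_knot: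
  assumes "k \<le> J"
  shows "lin_interp x J h (x k) = h k"
proof (cases "k < J")
  case True
  then show ?thesis
    using lin_interp_on_segment[OF True, of "x k" h] knot_less_Suc[OF True] by simp
next
  case False
  with assms J_pos obtain j where j: "k = Suc j" "j < J" by (cases k) auto
  then show ?thesis
    using lin_interp_on_segment[OF j(2), of "x k" h] knot_less_Suc[OF j(2)] by simp
qed

lemma lin_interp_affine_on_segment:
  assumes j: "j < J" and y: "x j \<le> y" "y \<le> x (Suc j)"
  shows "lin_interp x J h y = h j + (y - x j) * ((h (Suc j) - h j) / (x (Suc j) - x j))"
  unfolding lin_interp_on_segment[OF assms]
  using segment_interpolation_affine[OF knot_less_Suc[OF j]] .

lemma lin_interp_vanishes:
  assumes "\<And>j. j \<le> J \<Longrightarrow> h j = 0" "x 0 \<le> y" "y \<le> x J"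
  shows "lin_interp x J h y = 0"
  using seg_idx_bracket(1)[OF assms(2,3)] assms(1)
  unfolding lin_interp_def Let_def by simp

lemma convex_on_le_lin_interp:
  assumes x0: "x 0 = 0" and cvx: "convex_on {0..x J} f"
    and above: "\<And>j. j \<le> J \<Longrightarrow> f (x j) \<le> h j"
    and y: "y \<in> {0..x J}"
  shows "f y \<le> lin_interp x J h y"
proof -
  define j where "j = seg_idx x J y"
  have j: "j < J" "x j \<le> y" "y \<le> x (Suc j)"
    using seg_idx_bracket[of y] y x0 unfolding j_def by auto
  define s where "s = (y - x j) / (x (Suc j) - x j)"
  have one_minus_s: "1 - s = (x (Suc j) - y) / (x (Suc j) - x j)"
    using segment_weights(1)[OF knot_less_Suc[OF j(1)], of y] unfolding s_def by simp
  have s: "0 \<le> s" "s \<le> 1"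
    using j knot_less_Suc[OF j(1)] one_minus_s unfolding s_def by simp_all
  have "(1 - s) * x j + s * x (Suc j) = y"
    unfolding one_minus_s unfolding s_def by (rule segment_weights(2)[OF knot_less_Suc[OF j(1)]])
  then have y_comb: "(1 - s) *\<^sub>R x j + s *\<^sub>R x (Suc j) = y" by simp
  have knots_in: "x j \<in> {0..x J}" "x (Suc j) \<in> {0..x J}"
    using knot_le_iff[of 0 j] knot_le_iff[of j J] knot_le_iff[of 0 "Suc j"]
      knot_le_iff[of "Suc j" J] j x0 by auto
  have "f y \<le> (1 - s) * f (x j) + s * f (x (Suc j))"
    using convex_onD[OF cvx s knots_in] y_comb by simp
  also have "\<dots> \<le> (1 - s) * h j + s * h (Suc j)"
    using above[of j] above[of "Suc j"] j s by (intro add_mono mult_left_mono) auto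
  also have "\<dots> = lin_interp x J h y"
    using lin_interp_on_segment[OF j, of h] one_minus_s unfolding s_def by simp
  finally show ?thesis .
qed

text \<open>In the third case of the mixed interpolation (\<open>d (j+1) < u < d j\<close>) the hedge
  ratio \<open>u\<close> makes the left-hand side independent of \<open>y\<close>; it is then bounded via the
  constraint at \<open>j\<close> if \<open>k \<le> j\<close> and at \<open>j + 1\<close> otherwise.\<close>

lemma mixed_interp_hedge_to_knot:
  fixes A B d :: "nat \<Rightarrow> real"
  assumes C: "\<And>j k. j \<le> J \<Longrightarrow> k \<le> J \<Longrightarrow> 0 \<le> A j + B k + (x k - x j) * d j"
    and y: "x 0 \<le> y" "y \<le> x J" and k: "k \<le> J"
  shows "0 \<le> lin_interp x J A y + B k
           + (x k - y) * mixed_interp x J d (\<lambda>j. (A (Suc j) - A j) / (x (Suc j) - x j)) y"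
proof (cases "\<exists>j\<le>J. y = x j")
  case True
  then obtain j where j: "j \<le> J" "y = x j" by blast
  have "(LEAST i. i \<le> J \<and> y = x i) = j"
    by (rule Least_equality) (use j knot_eq_iff in auto)
  with True have "mixed_interp x J d (\<lambda>j. (A (Suc j) - A j) / (x (Suc j) - x j)) y = d j"
    unfolding mixed_interp_def by simp
  then show ?thesis using lin_interp_at_knot[OF j(1), of A] j C[OF j(1) k] by simp
next
  case False
  define j where "j = seg_idx x J y"
  have j: "j < J" "x j \<le> y" "y \<le> x (Suc j)"
    using seg_idx_bracket[OF y] unfolding j_def by auto
  define u where "u = (A (Suc j) - A j) / (x (Suc j) - x j)"
  have A_Suc: "A (Suc j) = A j + (x (Suc j) - x j) * u"
    using knot_less_Suc[OF j(1)] unfolding u_def by simp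
  have LA: "lin_interp x J A y = A j + (y - x j) * u"
    using lin_interp_affine_on_segment[OF j] unfolding u_def .
  have M: "mixed_interp x J d (\<lambda>j. (A (Suc j) - A j) / (x (Suc j) - x j)) y =
      (if d j \<le> u then d j else if u \<le> d (Suc j) then d (Suc j) else u)"
    unfolding mixed_interp_def if_not_P[OF False] by (simp add: Let_def j_def u_def)
  have Cj: "0 \<le> A j + B k + (x k - x j) * d j" using C j k by simp
  have CSj: "0 \<le> A (Suc j) + B k + (x k - x (Suc j)) * d (Suc j)" using C j k by simp
  consider "d j \<le> u" | "u < d j" "u \<le> d (Suc j)" | "u < d j" "d (Suc j) < u" "k \<le> j"
    | "u < d j" "d (Suc j) < u" "Suc j \<le> k"
    by linarith
  then show ?thesis
  proof cases
    case 1
    then have "0 \<le> (y - x j) * (u - d j)" using j by simp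
    with 1 Cj show ?thesis unfolding M LA by (simp add: algebra_simps)
  next
    case 2
    then have "0 \<le> (x (Suc j) - y) * (d (Suc j) - u)" using j by simp
    with 2 CSj show ?thesis unfolding M LA A_Suc by (simp add: algebra_simps)
  next
    case 3
    then have "x k \<le> x j" using knot_le_iff[of k j] j by simp
    with 3 have "0 \<le> (x j - x k) * (d j - u)" by simp
    with 3 Cj show ?thesis unfolding M LA by (simp add: algebra_simps)
  next
    case 4
    then have "x (Suc j) \<le> x k" using knot_le_iff[of "Suc j" k] k by simp
    with 4 have "0 \<le> (x k - x (Suc j)) * (u - d (Suc j))" by simp
    with 4 CSj show ?thesis unfolding M LA A_Suc by (simp add: algebra_simps)
  qed
qed

lemma mixed_interp_hedge:
  fixes A B d :: "nat \<Rightarrow> real"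
  assumes C: "\<And>j k. j \<le> J \<Longrightarrow> k \<le> J \<Longrightarrow> 0 \<le> A j + B k + (x k - x j) * d j"
    and y: "x 0 \<le> y" "y \<le> x J" and z: "x 0 \<le> z" "z \<le> x J"
  shows "0 \<le> lin_interp x J A y + lin_interp x J B z
           + (z - y) * mixed_interp x J d (\<lambda>j. (A (Suc j) - A j) / (x (Suc j) - x j)) y"
proof -
  define \<delta> where "\<delta> = mixed_interp x J d (\<lambda>j. (A (Suc j) - A j) / (x (Suc j) - x j)) y"
  define P where "P k = lin_interp x J A y + B k + (x k - y) * \<delta>" for k
  have P: "k \<le> J \<Longrightarrow> 0 \<le> P k" for k
    unfolding P_def \<delta>_def using mixed_interp_hedge_to_knot[OF C y] by blast
  define i where "i = seg_idx x J z"
  have i: "i < J" "x i \<le> z" "z \<le> x (Suc i)"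
    using seg_idx_bracket[OF z] unfolding i_def by auto
  define \<mu> where "\<mu> = (x (Suc i) - z) / (x (Suc i) - x i)"
  define \<nu> where "\<nu> = (z - x i) / (x (Suc i) - x i)"
  have weights: "0 \<le> \<mu>" "0 \<le> \<nu>" "\<mu> + \<nu> = 1" "\<mu> * x i + \<nu> * x (Suc i) = z"
    using i knot_less_Suc[OF i(1)] segment_weights[OF knot_less_Suc[OF i(1)], of z]
    unfolding \<mu>_def \<nu>_def by simp_all
  have "\<mu> * P i + \<nu> * P (Suc i)
      = (\<mu> + \<nu>) * lin_interp x J A y + (\<mu> * B i + \<nu> * B (Suc i))
        + ((\<mu> * x i + \<nu> * x (Suc i)) - (\<mu> + \<nu>) * y) * \<delta>"
    unfolding P_def by (simp add: algebra_simps)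
  also have "\<dots> = lin_interp x J A y + lin_interp x J B z + (z - y) * \<delta>"
    using weights lin_interp_on_segment[OF i, of B] unfolding \<mu>_def \<nu>_def by simp
  finally have combination:
    "\<mu> * P i + \<nu> * P (Suc i) = lin_interp x J A y + lin_interp x J B z + (z - y) * \<delta>" .
  have "0 \<le> \<mu> * P i + \<nu> * P (Suc i)"
    using P[of i] P[of "Suc i"] i weights by (intro add_nonneg_nonneg mult_nonneg_nonneg) auto
  then show ?thesis unfolding combination \<delta>_def .
qed

lemma LH_feasible_gain_before_exercise:
  assumes feas: "LH_feasible N J t x a e1 e2 v d1 d2" and n: "1 \<le> n" "n < N"
    and y: "x 0 \<le> y" "y \<le> x J" and z: "x 0 \<le> z" "z \<le> x J"
  shows "0 \<le> lin_interp x J (\<lambda>j. e1 j n) y + lin_interp x J (\<lambda>j. e2 j (Suc n)) z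
           + (z - y) * mixed_interp x J (\<lambda>j. d1 j n) (slope1 x e1 n) y"
proof -
  have "j \<le> J \<Longrightarrow> k \<le> J \<Longrightarrow> 0 \<le> e1 j n + e2 k (Suc n) + (x k - x j) * d1 j n" for j k
    using feas n unfolding LH_feasible_def by auto
  from mixed_interp_hedge[OF this y z] show ?thesis by (simp add: slope1_def[abs_def])
qed

lemma LH_feasible_gain_after_exercise:
  assumes feas: "LH_feasible N J t x a e1 e2 v d1 d2" and n: "1 \<le> n" "n < N"
    and y: "x 0 \<le> y" "y \<le> x J" and z: "x 0 \<le> z" "z \<le> x J"
  shows "lin_interp x J (\<lambda>j. v j n) y - lin_interp x J (\<lambda>j. v j (Suc n)) z
           \<le> lin_interp x J (\<lambda>j. e1 j n) y + lin_interp x J (\<lambda>j. e2 j (Suc n)) z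
             + (z - y) * mixed_interp x J (\<lambda>j. d2 j n) (slope2 x e1 v n) y"
proof -
  have constraint: "0 \<le> e1 j n + e2 k (Suc n) + (x k - x j) * d2 j n - v j n + v k (Suc n)"
    if "j \<le> J" "k \<le> J" for j k
    using feas n that unfolding LH_feasible_def by auto
  have "0 \<le> (e1 j n - v j n) + (e2 k (Suc n) + v k (Suc n)) + (x k - x j) * d2 j n"
    if "j \<le> J" "k \<le> J" for j k
    using constraint[OF that] by linarith
  from mixed_interp_hedge[OF this y z] show ?thesis
    by (simp add: slope2_def[abs_def] lin_interp_add lin_interp_diff)
qed

end

lemma Nidx_at_time:
  assumes "increasing_knots t N" and n: "n \<in> {1..N}"
  shows "Nidx t (t n) = n"
  unfolding Nidx_def
proof (rule Least_equality)
  show "1 \<le> n \<and> t n \<le> t n" using n by simp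
  fix m assume "1 \<le> m \<and> t n \<le> t m"
  then show "n \<le> m"
    using increasing_knots.knot_less[OF assms(1), of m n] n by (meson atLeastAtMost_iff not_le)
qed

text \<open>\<open>P n + Q (n+1) + g n\<close> is the gain of the strategy over \<open>[t n, t (n+1)]\<close>; the
  claims \<open>P\<close> (from \<open>e\<^sup>1\<close>) and \<open>Q\<close> (from \<open>e\<^sup>2\<close>) vanish at the last resp. first date.\<close>

lemma telescoping_payoff_bound:
  fixes P Q V g h :: "nat \<Rightarrow> real"
  assumes m: "1 \<le> m" "m \<le> N"
    and P_last: "P N = 0" and Q_first: "Q 1 = 0"
    and hold: "\<And>n. 1 \<le> n \<Longrightarrow> n < m \<Longrightarrow> 0 \<le> P n + Q (Suc n) + g n"
    and exercised: "\<And>n. m \<le> n \<Longrightarrow> n < N \<Longrightarrow> V n - V (Suc n) \<le> P n + Q (Suc n) + h n"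
  shows "V m \<le> (\<Sum>n=1..N. P n + Q n) + V N + (\<Sum>n=1..<m. g n) + (\<Sum>n=m..<N. h n)"
proof -
  define c where "c n = P n + Q (Suc n)" for n
  have "(\<Sum>n=1..<N. Q (Suc n)) = (\<Sum>n=Suc 1..<Suc N. Q n)"
    by (rule sum.shift_bounds_Suc_ivl[symmetric])
  also have "\<dots> = (\<Sum>n=1..N. Q n)"
    using Q_first m by (simp add: atLeastLessThanSuc_atLeastAtMost sum.atLeast_Suc_atMost)
  finally have "(\<Sum>n=1..N. Q n) = (\<Sum>n=1..<N. Q (Suc n))" ..
  moreover have "(\<Sum>n=1..N. P n) = (\<Sum>n=1..<N. P n)"
    using P_last m by (cases N) (auto simp: atLeastLessThanSuc_atLeastAtMost[symmetric])
  ultimately have "(\<Sum>n=1..N. P n + Q n) = (\<Sum>n=1..<N. c n)"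
    unfolding c_def by (simp add: sum.distrib)
  also have "\<dots> = (\<Sum>n=1..<m. c n) + (\<Sum>n=m..<N. c n)"
    by (rule sum.atLeastLessThan_concat[OF m, symmetric])
  finally have payoff_split: "(\<Sum>n=1..N. P n + Q n) = (\<Sum>n=1..<m. c n) + (\<Sum>n=m..<N. c n)" .
  have "0 \<le> (\<Sum>n=1..<m. c n) + (\<Sum>n=1..<m. g n)"
    using hold unfolding c_def sum.distrib[symmetric] by (intro sum_nonneg) auto
  moreover have "(\<Sum>n=m..<N. V n - V (Suc n)) \<le> (\<Sum>n=m..<N. c n) + (\<Sum>n=m..<N. h n)"
    using exercised unfolding c_def sum.distrib[symmetric] by (intro sum_mono) auto
  moreover have "(\<Sum>n=m..<N. V n - V (Suc n)) = V m - V N"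
    using sum_Suc_diff'[OF m(2), of V] by (simp add: sum_subtractf)
  ultimately show ?thesis unfolding payoff_split by linarith
qed

theorem mainTheorem8:
  fixes N J :: nat and t x :: "nat \<Rightarrow> real" and a :: "real \<Rightarrow> real \<Rightarrow> real"
    and e1 e2 v d1 d2 :: "nat \<Rightarrow> nat \<Rightarrow> real"
  assumes N1: "N \<ge> 1" and J1: "J \<ge> 1"
    and t0: "t 0 = 0" and tmono: "\<And>n. n < N \<Longrightarrow> t n < t (Suc n)"
    and x0: "x 0 = 0" and xmono: "\<And>j. j < J \<Longrightarrow> x j < x (Suc j)"
    and a_nonneg: "\<And>z n. z \<in> {0..x J} \<Longrightarrow> n \<in> {1..N} \<Longrightarrow> a z (t n) \<ge> 0"
    and a_convex: "\<And>n. n \<in> {1..N} \<Longrightarrow> convex_on {0..x J} (\<lambda>z. a z (t n))"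
    and feas: "LH_feasible N J t x a e1 e2 v d1 d2"
    and y: "\<And>n. n \<in> {1..N} \<Longrightarrow> y n \<in> {0..x J}"
    and rho: "\<rho> \<in> t ` {1..N}"
  shows "payoff_GT N J t x e1 e2 v d1 d2 y \<rho> \<ge> a (y (Nidx t \<rho>)) \<rho>"
proof -
  interpret increasing_knots x J using J1 xmono by unfold_locales
  obtain m where m: "m \<in> {1..N}" "\<rho> = t m" using rho by blast
  have "increasing_knots t N" using N1 tmono by unfold_locales
  then have Nidx_m: "Nidx t \<rho> = m" using Nidx_at_time m by blast
  have y_range: "n \<in> {1..N} \<Longrightarrow> x 0 \<le> y n \<and> y n \<le> x J" for n using y x0 by auto
  have claims_vanish: "e1 j N = 0" "e2 j 1 = 0" and v_above: "a (x j) (t m) \<le> v j m"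
    if "j \<le> J" for j
    using feas that m(1) unfolding LH_feasible_def by blast+
  let ?lin = "\<lambda>h n. lin_interp x J (\<lambda>j. h j n) (y n)"
  have "a (y m) (t m) \<le> ?lin v m"
    using convex_on_le_lin_interp[OF x0 a_convex[OF m(1)] v_above y[OF m(1)]] .
  moreover have "?lin v m \<le> payoff_GT N J t x e1 e2 v d1 d2 y \<rho>"
    unfolding payoff_GT_def Nidx_m
  proof (rule telescoping_payoff_bound[where P = "?lin e1" and Q = "?lin e2" and V = "?lin v"],
      goal_cases)
    case (5 n)
    then show ?case
      using LH_feasible_gain_before_exercise[OF feas] y_range[of n] y_range[of "Suc n"] m by simp
  next
    case (6 n)
    then show ?case
      using LH_feasible_gain_after_exercise[OF feas] y_range[of n] y_range[of "Suc n"] m by simp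
  qed (use m y_range[of N] y_range[of 1] claims_vanish in \<open>auto intro: lin_interp_vanishes\<close>)
  ultimately show ?thesis using m Nidx_m by simp
qed

end
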